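(* Let $d,J,n\ge1$, let $y_1,\dots,y_n\in\mathbb{R}^d$, and let $\{\theta^k\}_{k\in\mathbb N}$ be the sequence generated by the CEMM algorithm (described in the context) from an initial point $\theta^0\in\Theta$. Then the sequence $\{\Lambda(\theta^k\mid\mathbf y)\}_{k\in\mathbb N}$ is monotone non-decreasing and satisfies, for every $k$, $$\Lambda(\theta^{k+1}\mid\mathbf y)-\Lambda(\theta^k\mid\mathbf y)\ \ge\ D(\theta^{k+1},\theta^k\mid\mathbf y).$$
   Context: $\varphi(y\mid\mu,\Sigma)$ is the Gaussian density on $\mathbb R^d$ with mean $\mu$ and covariance $\Sigma$. $\Theta$ is the set of $\theta=(p_1,\dots,p_J,\mu_1,\dots,\mu_J,\Sigma_1,\dots,\Sigma_J)$ with $p_j\in(0,1)$, $\mu_j\in\mathbb R^d$, $\Sigma_j$ symmetric positive definite (proportions not required to sum to 1); write $\theta_j=(p_j,\mu_j,\Sigma_j)$. The observed log-likelihood is $L(\theta\mid\mathbf y)=\sum_{i=1}^n\log\sum_{j=1}^J p_j\varphi(y_i\mid\mu_j,\Sigma_j)$ and the modified log-likelihood is $\Lambda(\theta\mid\mathbf y)=L(\theta\mid\mathbf y)-n\big(\sum_{\ell=1}^J p_\ell-1\big)$. Let $t_{ij}(\theta)=p_j\varphi(y_i\mid\mu_j,\Sigma_j)/\sum_{\ell=1}^J p_\ell\varphi(y_i\mid\mu_\ell,\Sigma_\ell)$ and $D(\theta,\theta'\mid\mathbf y)=\sum_{i=1}^n\sum_{j=1}^J t_{ij}(\theta')\log\big(t_{ij}(\theta')/t_{ij}(\theta)\big)$.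 CEMM algorithm: given $\theta^k$, let $j=k-\lfloor k/J\rfloor J+1$ (so components are visited cyclically). Compute $t_{ij}(\theta^k)$ for $i=1,\dots,n$, set $p_j^{k+1}=\frac1n\sum_i t_{ij}(\theta^k)$, $\mu_j^{k+1}=\sum_i t_{ij}(\theta^k)y_i/\sum_i t_{ij}(\theta^k)$, $\Sigma_j^{k+1}=\sum_i t_{ij}(\theta^k)(y_i-\mu_j^{k+1})(y_i-\mu_j^{k+1})^{T}/\sum_i t_{ij}(\theta^k)$, and $\theta_\ell^{k+1}=\theta_\ell^k$ for $\ell\ne j$. (The updated proportions need not sum to $1$.) *)

theory Defs
  imports "HOL-Analysis.Analysis"
begin

text \<open>Parameters theta = (p, mu, Sigma), components indexed by j = 0..J-1
  (component j here is component j+1 of the paper). Data points y i, i = 0..n-1.\<close>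

type_synonym 'd param = "(nat \<Rightarrow> real) \<times> (nat \<Rightarrow> real^'d) \<times> (nat \<Rightarrow> real^'d^'d)"

definition prp :: "('d::finite) param \<Rightarrow> nat \<Rightarrow> real" where "prp th = fst th"
definition mn :: "('d::finite) param \<Rightarrow> nat \<Rightarrow> real^'d" where "mn th = fst (snd th)"
definition cv :: "('d::finite) param \<Rightarrow> nat \<Rightarrow> real^'d^'d" where "cv th = snd (snd th)"

definition pos_def_mat :: "real^('d::finite)^'d \<Rightarrow> bool" where
  "pos_def_mat S \<longleftrightarrow> transpose S = S \<and> (\<forall>x. x \<noteq> 0 \<longrightarrow> x \<bullet> (S *v x) > 0)"

definition gauss :: "real^('d::finite) \<Rightarrow> real^'d \<Rightarrow> real^'d^'d \<Rightarrow> real" where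
  "gauss y mu S = exp (- (1/2) * ((y - mu) \<bullet> (matrix_inv S *v (y - mu))))
                   / sqrt ((2 * pi) ^ CARD('d) * det S)"

text \<open>Membership in Theta (proportions need not sum to 1).\<close>
definition in_Theta :: "nat \<Rightarrow> ('d::finite) param \<Rightarrow> bool" where
  "in_Theta J th \<longleftrightarrow> (\<forall>j<J. 0 < prp th j \<and> prp th j < 1 \<and> pos_def_mat (cv th j))"

definition mix :: "nat \<Rightarrow> ('d::finite) param \<Rightarrow> real^'d \<Rightarrow> real" where
  "mix J th x = (\<Sum>l<J. prp th l * gauss x (mn th l) (cv th l))"

definition loglik :: "nat \<Rightarrow> nat \<Rightarrow> (nat \<Rightarrow> real^'d) \<Rightarrow> ('d::finite) param \<Rightarrow> real" where
  "loglik J n y th = (\<Sum>i<n. ln (mix J th (y i)))"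

definition modloglik :: "nat \<Rightarrow> nat \<Rightarrow> (nat \<Rightarrow> real^'d) \<Rightarrow> ('d::finite) param \<Rightarrow> real" where
  "modloglik J n y th = loglik J n y th - real n * ((\<Sum>l<J. prp th l) - 1)"

definition tij :: "nat \<Rightarrow> (nat \<Rightarrow> real^'d) \<Rightarrow> ('d::finite) param \<Rightarrow> nat \<Rightarrow> nat \<Rightarrow> real" where
  "tij J y th i j = prp th j * gauss (y i) (mn th j) (cv th j) / mix J th (y i)"

definition Dfun :: "nat \<Rightarrow> nat \<Rightarrow> (nat \<Rightarrow> real^'d) \<Rightarrow> 'd param \<Rightarrow> ('d::finite) param \<Rightarrow> real" where
  "Dfun J n y th th' = (\<Sum>i<n. \<Sum>j<J. tij J y th' i j * ln (tij J y th' i j / tij J y th i j))"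

text \<open>One CEMM step at iteration k: the component updated is j = k mod J
  (0-based; corresponds to k - floor(k/J) J + 1 in 1-based indexing).\<close>
definition cemm_step :: "nat \<Rightarrow> nat \<Rightarrow> (nat \<Rightarrow> real^'d) \<Rightarrow> nat \<Rightarrow> 'd param \<Rightarrow> ('d::finite) param" where
  "cemm_step J n y k th =
    (let j = k mod J;
         w = (\<lambda>i. tij J y th i j);
         sw = (\<Sum>i<n. w i);
         pj = sw / real n;
         muj = (\<Sum>i<n. w i *\<^sub>R y i) /\<^sub>R sw;
         Sj = (\<Sum>i<n. w i *\<^sub>R (\<chi> a b. (y i - muj) $ a * (y i - muj) $ b)) /\<^sub>R sw
     in ((prp th)(j := pj), (mn th)(j := muj), (cv th)(j := Sj)))"

end

theory Submission
  imports Defs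
begin

text \<open>Write \<open>A\<^sub>l(\<theta>, y) = p\<^sub>l \<phi>(y | \<mu>\<^sub>l, \<Sigma>\<^sub>l)\<close>. Averaging the identity
  \<open>ln \<Sigma>\<^sub>l A\<^sub>l = ln A\<^sub>l - ln t\<^sub>l\<close> over the posterior weights \<open>t\<^sub>i\<^sub>l(\<theta>\<^sup>k)\<close> gives
  \<open>\<Lambda>(\<theta>') - \<Lambda>(\<theta>\<^sup>k) = Q(\<theta>') - Q(\<theta>\<^sup>k) + D(\<theta>', \<theta>\<^sup>k)\<close> with the complete-data objective
  \<open>Q(\<theta>) = \<Sigma>\<^sub>i \<Sigma>\<^sub>l t\<^sub>i\<^sub>l(\<theta>\<^sup>k) ln A\<^sub>l(\<theta>, y\<^sub>i) - n \<Sigma>\<^sub>l p\<^sub>l\<close>. A CEMM step changes only one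
  component and replaces it by the maximiser of its summand of \<open>Q\<close>: for the proportion this is
  \<open>ln x \<le> x - 1\<close>, for mean and covariance it is weighted Gaussian maximum likelihood, which
  comes down to \<open>ln det M \<le> tr M - d\<close> for positive definite \<open>M\<close> and is proved through the
  spectral theorem. So \<open>Q\<close> does not decrease, and monotonicity follows from \<open>D \<ge> 0\<close> (Gibbs).\<close>

section \<open>Spectral theorem for real symmetric matrices\<close>

lemma symmetric_matrix_inner_commute:
  fixes A :: "real^'n^'n"
  assumes "transpose A = A"
  shows "x \<bullet> (A *v y) = y \<bullet> (A *v x)"
proof -
  have "x \<bullet> (A *v y) = (x v* A) \<bullet> y" by (simp add: dot_lmul_matrix)
  also have "x v* A = transpose A *v x"
    by (metis transpose_transpose vector_transpose_matrix)
  finally show ?thesis using assms by (simp add: inner_commute)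
qed

lemma quadratic_nonpos_imp_zero:
  fixes a b :: real
  assumes "\<And>t. 2 * t * a + t\<^sup>2 * b \<le> 0"
  shows "a = 0"
proof (rule ccontr)
  assume "a \<noteq> 0"
  define c where "c = \<bar>b\<bar> + 1"
  define t where "t = a / c"
  have c: "c > 0" "b \<ge> - c" by (auto simp: c_def)
  have "t\<^sup>2 * b \<ge> - (t\<^sup>2 * c)"
    using mult_left_mono[OF c(2), of "t\<^sup>2"] by simp
  moreover have "t\<^sup>2 * c = a\<^sup>2 / c" "2 * t * a = 2 * a\<^sup>2 / c"
    using c by (simp_all add: t_def power2_eq_square)
  moreover have "a\<^sup>2 / c > 0" using \<open>a \<noteq> 0\<close> c by simp
  ultimately have "2 * t * a + t\<^sup>2 * b > 0" by linarith
  with assms[of t] show False by simp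
qed

text \<open>Along \<open>v + t w\<close> with \<open>w = A v - \<lambda> v\<close> the first-order term of the quadratic form is
  \<open>2 t (w \<bullet> w)\<close>, so maximality forces \<open>w = 0\<close>.\<close>
lemma symmetric_matrix_maximizer_eigenvector:
  fixes A :: "real^'n^'n"
  assumes sym: "transpose A = A" and V: "subspace V" and inv: "\<And>x. x \<in> V \<Longrightarrow> A *v x \<in> V"
    and v: "v \<in> V" "norm v = 1"
    and max: "\<And>z. z \<in> V \<Longrightarrow> z \<bullet> (A *v z) \<le> (v \<bullet> (A *v v)) * (z \<bullet> z)"
  shows "A *v v = (v \<bullet> (A *v v)) *\<^sub>R v"
proof -
  define f where "f = (\<lambda>x::real^'n. x \<bullet> (A *v x))"
  define l where "l = f v"
  define w where "w = A *v v - l *\<^sub>R v"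
  have wV: "w \<in> V" unfolding w_def using V inv v(1) by (simp add: subspace_diff subspace_scale)
  have vv: "v \<bullet> v = 1" using v(2) by (simp add: norm_eq_1)
  have vw: "v \<bullet> w = 0" "w \<bullet> v = 0"
    using vv by (simp_all add: w_def l_def f_def inner_diff_left inner_diff_right inner_commute)
  have "A *v v = w + l *\<^sub>R v" by (simp add: w_def)
  hence wAv: "w \<bullet> (A *v v) = w \<bullet> w" using vw by (simp add: inner_add_right)
  have vAw: "v \<bullet> (A *v w) = w \<bullet> w"
    using symmetric_matrix_inner_commute[OF sym, of v w] wAv by simp
  have "2 * t * (w \<bullet> w) + t\<^sup>2 * (f w - l * (w \<bullet> w)) \<le> 0" for t
  proof -
    have "v + t *\<^sub>R w \<in> V" using v(1) wV V by (simp add: subspace_add subspace_scale)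
    hence le: "f (v + t *\<^sub>R w) \<le> l * ((v + t *\<^sub>R w) \<bullet> (v + t *\<^sub>R w))"
      using max unfolding f_def l_def by blast
    have e: "A *v (v + t *\<^sub>R w) = A *v v + t *\<^sub>R (A *v w)"
      by (simp add: matrix_vector_right_distrib matrix_vector_mult_scaleR)
    have "f (v + t *\<^sub>R w) = v \<bullet> (A *v v) + t * (v \<bullet> (A *v w)) + t * (w \<bullet> (A *v v))
        + t * (t * (w \<bullet> (A *v w)))"
      unfolding f_def e
      by (simp only: inner_add_left inner_add_right inner_scaleR_left inner_scaleR_right)
        (simp add: distrib_left)
    also have "\<dots> = l + 2 * t * (w \<bullet> w) + t\<^sup>2 * f w"
      unfolding vAw wAv l_def f_def by (simp add: power2_eq_square)
    finally have "f (v + t *\<^sub>R w) = l + 2 * t * (w \<bullet> w) + t\<^sup>2 * f w" .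
    moreover have "(v + t *\<^sub>R w) \<bullet> (v + t *\<^sub>R w) = 1 + t\<^sup>2 * (w \<bullet> w)"
      using vv vw by (simp add: inner_add_left inner_add_right power2_eq_square)
    ultimately show ?thesis using le by (simp add: right_diff_distrib distrib_left mult.left_commute)
  qed
  hence "w \<bullet> w = 0" by (rule quadratic_nonpos_imp_zero)
  thus ?thesis by (simp add: w_def l_def f_def)
qed

lemma symmetric_matrix_invariant_subspace_eigenvector:
  fixes A :: "real^'n^'n"
  assumes sym: "transpose A = A" and V: "subspace V" "V \<noteq> {0}"
    and inv: "\<And>x. x \<in> V \<Longrightarrow> A *v x \<in> V"
  obtains v where "v \<in> V" "norm v = 1" "A *v v = (v \<bullet> (A *v v)) *\<^sub>R v"
proof -
  define K where "K = V \<inter> sphere 0 1"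
  define f where "f = (\<lambda>x::real^'n. x \<bullet> (A *v x))"
  have cK: "compact K" unfolding K_def
    using closed_Int_compact[OF closed_subspace[OF V(1)] compact_sphere] .
  obtain x where x: "x \<in> V" "x \<noteq> 0" using V subspace_0 by blast
  then have "x /\<^sub>R norm x \<in> K" using V(1) unfolding K_def by (simp add: subspace_scale)
  hence ne: "K \<noteq> {}" by blast
  have cf: "continuous_on K f" unfolding f_def by (intro continuous_intros)
  obtain v where v: "v \<in> K" and vmax: "\<And>u. u \<in> K \<Longrightarrow> f u \<le> f v"
    using continuous_attains_sup[OF cK ne cf] by blast
  have vmax_V: "f z \<le> f v * (z \<bullet> z)" if z: "z \<in> V" for z
  proof (cases "z = 0")
    case False
    have "z /\<^sub>R norm z \<in> K" using z False V(1) unfolding K_def by (simp add: subspace_scale)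
    hence "f (z /\<^sub>R norm z) \<le> f v" by (rule vmax)
    moreover have "f z = (norm z)\<^sup>2 * f (z /\<^sub>R norm z)"
      using False by (simp add: f_def matrix_vector_mult_scaleR power2_eq_square field_simps)
    moreover have "z \<bullet> z = (norm z)\<^sup>2" by (simp add: power2_norm_eq_inner)
    ultimately show ?thesis by (metis mult.commute mult_left_mono zero_le_power2)
  qed (simp add: f_def)
  have "v \<in> V" "norm v = 1" using v by (auto simp: K_def)
  with symmetric_matrix_maximizer_eigenvector[OF sym V(1) inv this] vmax_V show ?thesis
    using that unfolding f_def by blast
qed

lemma symmetric_matrix_eigenvector_orthogonal_to:
  fixes A :: "real^'n^'n"
  assumes sym: "transpose A = A" and dim: "dim B < DIM(real^'n)"
    and eig: "\<And>b. b \<in> B \<Longrightarrow> A *v b = (b \<bullet> (A *v b)) *\<^sub>R b"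
  obtains v where "norm v = 1" "A *v v = (v \<bullet> (A *v v)) *\<^sub>R v" "\<And>b. b \<in> B \<Longrightarrow> orthogonal b v"
proof -
  obtain x :: "real^'n" where x: "x \<noteq> 0" "\<And>y. y \<in> span B \<Longrightarrow> orthogonal x y"
    using orthogonal_to_subspace_exists[OF dim] by blast
  define V where "V = {y. \<forall>b \<in> B. orthogonal b y}"
  have sV: "subspace V" unfolding V_def by (rule subspace_orthogonal_to_vectors)
  have "x \<in> V" unfolding V_def using x(2) span_base orthogonal_commute by blast
  hence nV: "V \<noteq> {0}" using x(1) by blast
  have inv: "A *v z \<in> V" if z: "z \<in> V" for z
  proof -
    have "orthogonal b (A *v z)" if b: "b \<in> B" for b
    proof -
      have "b \<bullet> (A *v z) = z \<bullet> (A *v b)" by (rule symmetric_matrix_inner_commute[OF sym])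
      also have "\<dots> = (b \<bullet> (A *v b)) * (z \<bullet> b)" using eig b by (metis inner_scaleR_right)
      also have "z \<bullet> b = 0" using z b unfolding V_def orthogonal_def by (simp add: inner_commute)
      finally show ?thesis by (simp add: orthogonal_def)
    qed
    thus ?thesis unfolding V_def by blast
  qed
  obtain v where "v \<in> V" "norm v = 1" "A *v v = (v \<bullet> (A *v v)) *\<^sub>R v"
    using symmetric_matrix_invariant_subspace_eigenvector[OF sym sV nV inv] by blast
  with that show ?thesis unfolding V_def by blast
qed

lemma symmetric_matrix_orthonormal_eigenbasis:
  fixes A :: "real^'n^'n"
  assumes sym: "transpose A = A"
  obtains B where "finite B" "card B = CARD('n)" "pairwise orthogonal B"
    "\<And>b. b \<in> B \<Longrightarrow> norm b = 1 \<and> A *v b = (b \<bullet> (A *v b)) *\<^sub>R b"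
proof -
  have "\<exists>B. finite B \<and> card B = k \<and> pairwise orthogonal B \<and>
     (\<forall>b\<in>B. norm b = 1 \<and> A *v b = (b \<bullet> (A *v b)) *\<^sub>R b)" if "k \<le> CARD('n)" for k
    using that
  proof (induction k)
    case 0
    show ?case by (rule exI[of _ "{}"]) simp
  next
    case (Suc k)
    then obtain B where B: "finite B" "card B = k" "pairwise orthogonal B"
      "\<forall>b\<in>B. norm b = 1 \<and> A *v b = (b \<bullet> (A *v b)) *\<^sub>R b" by auto
    have "0 \<notin> B" using B(4) by force
    hence "independent B" using B(3) pairwise_orthogonal_independent by blast
    hence "dim B = k" using B(2) dim_eq_card_independent by metis
    hence "dim B < DIM(real^'n)" using Suc.prems by simp
    then obtain v where v: "norm v = 1" "A *v v = (v \<bullet> (A *v v)) *\<^sub>R v"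
        "\<And>b. b \<in> B \<Longrightarrow> orthogonal b v"
      using symmetric_matrix_eigenvector_orthogonal_to[OF sym] B(4) by metis
    have vB: "v \<notin> B" using v(1,3) by (force simp: orthogonal_def)
    have po: "pairwise orthogonal (insert v B)"
      using B(3) v(3) unfolding pairwise_insert by (auto simp: orthogonal_commute)
    show ?case
      by (rule exI[of _ "insert v B"]) (use B vB po v in auto)
  qed
  then obtain B where "finite B" "card B = CARD('n)" "pairwise orthogonal B"
    "\<forall>b\<in>B. norm b = 1 \<and> A *v b = (b \<bullet> (A *v b)) *\<^sub>R b"
    by blast
  with that show ?thesis by blast
qed

definition diag_mat :: "('n::finite \<Rightarrow> real) \<Rightarrow> real^'n^'n" where
  "diag_mat lam = (\<chi> i j. if i = j then lam i else 0)"

lemma det_diag_mat: "det (diag_mat lam) = prod lam UNIV"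
  by (subst det_diagonal) (auto simp: diag_mat_def)

lemma trace_diag_mat: "trace (diag_mat lam) = sum lam UNIV"
  by (simp add: trace_def diag_mat_def)

lemma transpose_diag_mat: "transpose (diag_mat lam) = diag_mat lam"
  by (simp add: transpose_def diag_mat_def vec_eq_iff)

lemma diag_mat_mult: "diag_mat a ** diag_mat b = diag_mat (\<lambda>i. a i * b i)"
proof -
  have "(diag_mat a ** diag_mat b) $ i $ j = diag_mat (\<lambda>i. a i * b i) $ i $ j" for i j
  proof -
    have "(diag_mat a ** diag_mat b) $ i $ j
        = (\<Sum>k\<in>UNIV. (if i = k then a i else 0) * (if k = j then b k else 0))"
      by (simp add: matrix_matrix_mult_def diag_mat_def)
    also have "\<dots> = (\<Sum>k\<in>UNIV. if k = i then (if i = j then a i * b i else 0) else 0)"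
      by (rule sum.cong) auto
    finally show ?thesis by (simp add: diag_mat_def)
  qed
  thus ?thesis by (simp add: vec_eq_iff)
qed

lemma det_orthogonal_conj:
  fixes Q :: "real^'n^'n"
  assumes "orthogonal_matrix Q"
  shows "det (Q ** D ** transpose Q) = det D"
proof -
  have "det Q * det Q = 1" using det_orthogonal_matrix[OF assms] by auto
  thus ?thesis by (simp add: det_mul)
qed

lemma trace_orthogonal_conj:
  fixes Q :: "real^'n^'n"
  assumes "orthogonal_matrix Q"
  shows "trace (Q ** D ** transpose Q) = trace D"
proof -
  have "trace ((Q ** D) ** transpose Q) = trace (transpose Q ** (Q ** D))" by (rule trace_mul_sym)
  also have "\<dots> = trace D" using assms by (simp add: matrix_mul_assoc orthogonal_matrix_def)
  finally show ?thesis .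
qed

lemma matrix_mul_diag_mat_nth: "(Q ** diag_mat lam) $ i $ j = Q $ i $ j * lam j"
  by (simp add: matrix_matrix_mult_def diag_mat_def if_distrib[of "(*) _"] cong: if_cong)

lemma matrix_mul_eigencolumns:
  fixes A Q :: "real^'n^'n"
  assumes "\<And>j. A *v column j Q = lam j *\<^sub>R column j Q"
  shows "A ** Q = Q ** diag_mat lam"
proof -
  have "(A ** Q) $ i $ j = (A *v column j Q) $ i" for i j
    by (simp add: matrix_matrix_mult_def matrix_vector_mult_def column_def)
  thus ?thesis using assms by (simp add: vec_eq_iff matrix_mul_diag_mat_nth column_def mult.commute)
qed

lemma symmetric_matrix_diagonalization:
  fixes A :: "real^'n^'n"
  assumes sym: "transpose A = A"
  obtains Q lam where "orthogonal_matrix Q" "A = Q ** diag_mat lam ** transpose Q"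
    "\<And>i. lam i = column i Q \<bullet> (A *v column i Q)"
proof -
  obtain B where B: "finite B" "card B = CARD('n)" "pairwise orthogonal B"
      "\<And>b. b \<in> B \<Longrightarrow> norm b = 1 \<and> A *v b = (b \<bullet> (A *v b)) *\<^sub>R b"
    using symmetric_matrix_orthonormal_eigenbasis[OF sym] by blast
  obtain g where g: "bij_betw g (UNIV::'n set) B"
    using finite_same_card_bij[of "UNIV::'n set" B] B by auto
  define Q :: "real^'n^'n" where "Q = (\<chi> i j. g j $ i)"
  define lam where "lam j = g j \<bullet> (A *v g j)" for j
  have col: "column j Q = g j" for j unfolding Q_def column_def by (simp add: vec_eq_iff)
  have gB: "g j \<in> B" for j using g bij_betwE by blast
  have oQ: "orthogonal_matrix Q"
    unfolding orthogonal_matrix_orthonormal_columns col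
  proof (intro conjI allI impI)
    fix i show "norm (g i) = 1" using B(4) gB by blast
  next
    fix i j :: 'n assume "i \<noteq> j"
    hence "g i \<noteq> g j" using g by (metis UNIV_I bij_betw_iff_bijections)
    thus "orthogonal (g i) (g j)" using B(3) gB unfolding pairwise_def by blast
  qed
  have "A *v column j Q = lam j *\<^sub>R column j Q" for j
    using B(4)[OF gB] unfolding col lam_def by blast
  hence AQ: "A ** Q = Q ** diag_mat lam" by (rule matrix_mul_eigencolumns)
  have "A = A ** (Q ** transpose Q)" using oQ by (simp add: orthogonal_matrix_def)
  also have "\<dots> = Q ** diag_mat lam ** transpose Q" by (simp add: matrix_mul_assoc AQ)
  finally have "A = Q ** diag_mat lam ** transpose Q" .
  moreover have "lam i = column i Q \<bullet> (A *v column i Q)" for i by (simp add: col lam_def)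
  ultimately show ?thesis by (rule that[OF oQ])
qed

section \<open>Positive definite matrices\<close>

lemma pos_def_mat_diagonalization:
  fixes A :: "real^'n^'n"
  assumes pd: "pos_def_mat A"
  obtains Q lam where "orthogonal_matrix Q" "A = Q ** diag_mat lam ** transpose Q" "\<And>i. lam i > 0"
proof -
  have sym: "transpose A = A" using pd by (simp add: pos_def_mat_def)
  obtain Q lam where Q: "orthogonal_matrix Q" "A = Q ** diag_mat lam ** transpose Q"
      "\<And>i. lam i = column i Q \<bullet> (A *v column i Q)"
    using symmetric_matrix_diagonalization[OF sym] by metis
  have "column i Q \<noteq> 0" for i
  proof -
    have "norm (column i Q) = 1" using Q(1) orthogonal_matrix_orthonormal_columns by blast
    thus ?thesis by auto
  qed
  hence "lam i > 0" for i using Q(3) pd by (simp add: pos_def_mat_def)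
  with Q(1,2) show ?thesis by (rule that)
qed

lemma pos_def_mat_det_pos:
  fixes A :: "real^'n^'n"
  assumes "pos_def_mat A"
  shows "det A > 0"
proof -
  obtain Q lam where Q: "orthogonal_matrix Q" "A = Q ** diag_mat lam ** transpose Q" "\<And>i. lam i > 0"
    using pos_def_mat_diagonalization[OF assms] by metis
  show ?thesis using Q by (simp add: det_orthogonal_conj det_diag_mat prod_pos)
qed

lemma pos_def_mat_ln_det_le_trace:
  fixes A :: "real^'n^'n"
  assumes "pos_def_mat A"
  shows "ln (det A) \<le> trace A - real CARD('n)"
proof -
  obtain Q lam where Q: "orthogonal_matrix Q" "A = Q ** diag_mat lam ** transpose Q" "\<And>i. lam i > 0"
    using pos_def_mat_diagonalization[OF assms] by metis
  have "ln (det A) = (\<Sum>i\<in>UNIV. ln (lam i))"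
    using Q by (simp add: det_orthogonal_conj det_diag_mat ln_prod less_imp_neq[symmetric])
  also have "\<dots> \<le> (\<Sum>i\<in>UNIV. lam i - 1)" by (rule sum_mono) (simp add: ln_le_minus_one Q(3))
  also have "\<dots> = trace A - real CARD('n)"
    using Q by (simp add: trace_orthogonal_conj trace_diag_mat sum_subtractf)
  finally show ?thesis .
qed

lemma pos_def_mat_sqrt:
  fixes S :: "real^'n^'n"
  assumes "pos_def_mat S"
  obtains R where "transpose R = R" "R ** R = S"
proof -
  obtain Q lam where Q: "orthogonal_matrix Q" "S = Q ** diag_mat lam ** transpose Q" "\<And>i. lam i > 0"
    using pos_def_mat_diagonalization[OF assms] by metis
  define D where "D = diag_mat (\<lambda>i. sqrt (lam i))"
  define R where "R = Q ** D ** transpose Q"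
  have "transpose R = R"
    by (simp add: R_def D_def matrix_transpose_mul transpose_diag_mat matrix_mul_assoc)
  moreover have "R ** R = S"
  proof -
    have "R ** R = Q ** D ** (transpose Q ** Q) ** D ** transpose Q"
      by (simp add: R_def matrix_mul_assoc)
    also have "\<dots> = Q ** (D ** D) ** transpose Q"
      using Q(1) by (simp add: orthogonal_matrix_def matrix_mul_assoc)
    also have "D ** D = diag_mat lam"
      unfolding D_def diag_mat_mult using Q(3) by (simp add: less_imp_le)
    finally show ?thesis using Q(2) by simp
  qed
  ultimately show ?thesis using that by blast
qed

lemma pos_def_mat_matrix_inv:
  fixes S :: "real^'n^'n"
  assumes S: "pos_def_mat S"
  shows "pos_def_mat (matrix_inv S)" "matrix_inv S ** S = mat 1" "S ** matrix_inv S = mat 1"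
    "det (matrix_inv S) * det S = 1"
proof -
  have "invertible S" using pos_def_mat_det_pos[OF S] by (simp add: invertible_det_nz)
  hence M: "S ** matrix_inv S = mat 1" "matrix_inv S ** S = mat 1"
    unfolding matrix_inv_def invertible_def by (metis (mono_tags, lifting) someI_ex)+
  show "matrix_inv S ** S = mat 1" "S ** matrix_inv S = mat 1" using M by auto
  show "det (matrix_inv S) * det S = 1" using M by (metis det_I det_mul)
  define M' where "M' = matrix_inv S"
  have symS: "transpose S = S" and pS: "\<And>x. x \<noteq> 0 \<Longrightarrow> x \<bullet> (S *v x) > 0"
    using S by (auto simp: pos_def_mat_def)
  have "transpose M' ** S = mat 1"
    by (metis M M'_def matrix_transpose_mul symS transpose_mat)
  hence tM: "transpose M' = M'"
    by (metis M M'_def matrix_mul_assoc matrix_mul_lid matrix_mul_rid)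
  show "pos_def_mat (matrix_inv S)" unfolding pos_def_mat_def M'_def[symmetric]
  proof (intro conjI allI impI tM)
    fix x :: "real^'n" assume x: "x \<noteq> 0"
    define z where "z = M' *v x"
    have Sz: "S *v z = x" using M by (simp add: z_def M'_def matrix_vector_mul_assoc)
    hence "z \<noteq> 0" using x by auto
    hence "0 < z \<bullet> (S *v z)" by (rule pS)
    also have "\<dots> = x \<bullet> (M' *v x)" using Sz by (simp add: z_def inner_commute)
    finally show "0 < x \<bullet> (M' *v x)" .
  qed
qed

text \<open>Apply \<open>pos_def_mat_ln_det_le_trace\<close> to \<open>R C R\<close>, where \<open>R\<close> is the square root of \<open>S\<close>.\<close>
lemma pos_def_mat_ln_det_mult_le_trace:
  fixes C S :: "real^'n^'n"
  assumes C: "pos_def_mat C" and S: "pos_def_mat S"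
  shows "ln (det C * det S) \<le> trace (C ** S) - real CARD('n)"
proof -
  obtain R where R: "transpose R = R" "R ** R = S" using pos_def_mat_sqrt[OF S] by metis
  have symC: "transpose C = C" and pC: "\<And>x. x \<noteq> 0 \<Longrightarrow> x \<bullet> (C *v x) > 0"
    using C by (auto simp: pos_def_mat_def)
  have pS: "\<And>x. x \<noteq> 0 \<Longrightarrow> x \<bullet> (S *v x) > 0" using S by (auto simp: pos_def_mat_def)
  define N where "N = R ** C ** R"
  have "pos_def_mat N" unfolding pos_def_mat_def
  proof (intro conjI allI impI)
    show "transpose N = N" unfolding N_def using R(1) symC by (simp add: matrix_transpose_mul matrix_mul_assoc)
  next
    fix x :: "real^'n" assume x: "x \<noteq> 0"
    have "R *v x \<noteq> 0"
    proof
      assume "R *v x = 0"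
      hence "S *v x = 0" using R(2) by (metis matrix_vector_mul_assoc matrix_vector_mult_0_right)
      thus False using pS[OF x] by simp
    qed
    hence "0 < (R *v x) \<bullet> (C *v (R *v x))" by (rule pC)
    also have "\<dots> = x \<bullet> (R *v (C *v (R *v x)))"
      using symmetric_matrix_inner_commute[OF R(1), of x "C *v (R *v x)"] by (simp add: inner_commute)
    also have "\<dots> = x \<bullet> (N *v x)" by (simp add: N_def matrix_vector_mul_assoc matrix_mul_assoc)
    finally show "0 < x \<bullet> (N *v x)" .
  qed
  hence "ln (det N) \<le> trace N - real CARD('n)" by (rule pos_def_mat_ln_det_le_trace)
  moreover have "det N = det C * det S" unfolding N_def R(2)[symmetric] by (simp add: det_mul)
  moreover have "trace N = trace (C ** S)"
  proof -
    have "trace N = trace (R ** (C ** R))" by (simp add: N_def matrix_mul_assoc)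
    also have "\<dots> = trace ((C ** R) ** R)" by (rule trace_mul_sym)
    finally show ?thesis by (simp add: matrix_mul_assoc[symmetric] R(2))
  qed
  ultimately show ?thesis by simp
qed

section \<open>Weighted Gaussian maximum likelihood\<close>

lemma sum_quadratic_form_eq_trace:
  fixes C :: "real^'n^'n" and z :: "'i \<Rightarrow> real^'n"
  shows "(\<Sum>i\<in>I. t i * (z i \<bullet> (C *v z i))) =
     trace (C ** (\<Sum>i\<in>I. t i *\<^sub>R (\<chi> a b. z i $ a * z i $ b)))"
proof -
  have "(\<Sum>i\<in>I. t i * (z i \<bullet> (C *v z i)))
      = (\<Sum>i\<in>I. \<Sum>a\<in>UNIV. \<Sum>b\<in>UNIV. t i * (z i $ a * (C $ a $ b * z i $ b)))"
    by (simp add: inner_vec_def matrix_vector_mult_def sum_distrib_left)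
  also have "\<dots> = (\<Sum>a\<in>UNIV. \<Sum>i\<in>I. \<Sum>b\<in>UNIV. t i * (z i $ a * (C $ a $ b * z i $ b)))"
    by (rule sum.swap)
  also have "\<dots> = (\<Sum>a\<in>UNIV. \<Sum>b\<in>UNIV. \<Sum>i\<in>I. t i * (z i $ a * (C $ a $ b * z i $ b)))"
    by (rule sum.cong[OF refl], rule sum.swap)
  also have "\<dots> = (\<Sum>a\<in>UNIV. \<Sum>b\<in>UNIV. C $ a $ b * (\<Sum>i\<in>I. t i * (z i $ b * z i $ a)))"
    by (simp add: sum_distrib_left mult_ac)
  also have "\<dots> = trace (C ** (\<Sum>i\<in>I. t i *\<^sub>R (\<chi> a b. z i $ a * z i $ b)))"
    by (simp add: trace_def matrix_matrix_mult_def sum_component)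
  finally show ?thesis .
qed

lemma weighted_sum_quadratic_form_split:
  fixes C :: "real^'n^'n" and y :: "'i \<Rightarrow> real^'n"
  assumes W: "W = (\<Sum>i\<in>I. t i)" "W \<noteq> 0"
    and m: "m = (\<Sum>i\<in>I. t i *\<^sub>R y i) /\<^sub>R W"
    and S: "S = (\<Sum>i\<in>I. t i *\<^sub>R (\<chi> a b. (y i - m) $ a * (y i - m) $ b)) /\<^sub>R W"
  shows "(\<Sum>i\<in>I. t i * ((y i - mu) \<bullet> (C *v (y i - mu)))) =
     W * trace (C ** S) + W * ((m - mu) \<bullet> (C *v (m - mu)))"
proof -
  define z where "z i = y i - m" for i
  define d where "d = m - mu"
  have ym: "y i - mu = z i + d" for i by (simp add: z_def d_def)
  have "(\<Sum>i\<in>I. t i *\<^sub>R y i) = W *\<^sub>R m" using W m by simp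
  hence sz: "(\<Sum>i\<in>I. t i *\<^sub>R z i) = 0"
    by (simp add: z_def scaleR_right_diff_distrib sum_subtractf W(1) scaleR_sum_left[symmetric])
  have e: "(y i - mu) \<bullet> (C *v (y i - mu))
      = z i \<bullet> (C *v z i) + z i \<bullet> (C *v d) + (d v* C) \<bullet> z i + d \<bullet> (C *v d)" for i
    unfolding ym by (simp add: matrix_vector_right_distrib inner_add_left inner_add_right dot_lmul_matrix)
  have "(\<Sum>i\<in>I. t i * (z i \<bullet> (C *v d))) = (\<Sum>i\<in>I. t i *\<^sub>R z i) \<bullet> (C *v d)"
    by (simp add: inner_sum_left)
  hence s1: "(\<Sum>i\<in>I. t i * (z i \<bullet> (C *v d))) = 0" using sz by simp
  have "(\<Sum>i\<in>I. t i * ((d v* C) \<bullet> z i)) = (d v* C) \<bullet> (\<Sum>i\<in>I. t i *\<^sub>R z i)"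
    by (simp add: inner_sum_right)
  hence s2: "(\<Sum>i\<in>I. t i * ((d v* C) \<bullet> z i)) = 0" using sz by simp
  have "(\<Sum>i\<in>I. t i * (z i \<bullet> (C *v z i)))
      = trace (C ** (\<Sum>i\<in>I. t i *\<^sub>R (\<chi> a b. z i $ a * z i $ b)))"
    by (rule sum_quadratic_form_eq_trace)
  also have "(\<Sum>i\<in>I. t i *\<^sub>R (\<chi> a b. z i $ a * z i $ b)) = W *\<^sub>R S"
    using W(2) by (simp add: S z_def)
  also have "trace (C ** (W *\<^sub>R S)) = W * trace (C ** S)"
    by (simp add: trace_def matrix_matrix_mult_def sum_distrib_left mult_ac)
  finally have s3: "(\<Sum>i\<in>I. t i * (z i \<bullet> (C *v z i))) = W * trace (C ** S)" .
  have "(\<Sum>i\<in>I. t i * ((y i - mu) \<bullet> (C *v (y i - mu)))) =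
     (\<Sum>i\<in>I. t i * (z i \<bullet> (C *v z i))) + (\<Sum>i\<in>I. t i * (z i \<bullet> (C *v d))) +
     (\<Sum>i\<in>I. t i * ((d v* C) \<bullet> z i)) + (\<Sum>i\<in>I. t i) * (d \<bullet> (C *v d))"
    unfolding e by (simp add: distrib_left sum.distrib sum_distrib_right)
  also have "\<dots> = W * trace (C ** S) + W * (d \<bullet> (C *v d))" using s1 s2 s3 W(1) by simp
  finally show ?thesis by (simp add: d_def)
qed

lemma gauss_pos:
  fixes S :: "real^'d^'d"
  assumes "det S > 0"
  shows "gauss y mu S > 0"
  unfolding gauss_def using assms by simp

lemma ln_gauss:
  fixes S :: "real^'d^'d"
  assumes "det S > 0"
  shows "ln (gauss y mu S) = - (1/2) * ((y - mu) \<bullet> (matrix_inv S *v (y - mu)))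
           - (1/2) * (ln ((2 * pi) ^ CARD('d)) + ln (det S))"
proof -
  have c: "(2 * pi) ^ CARD('d) > 0" by simp
  have "ln (gauss y mu S) = - (1/2) * ((y - mu) \<bullet> (matrix_inv S *v (y - mu)))
           - ln (sqrt ((2 * pi) ^ CARD('d) * det S))"
    unfolding gauss_def using assms c by (simp add: ln_div)
  also have "ln (sqrt ((2 * pi) ^ CARD('d) * det S))
      = (1/2) * (ln ((2 * pi) ^ CARD('d)) + ln (det S))"
    using assms c by (simp add: ln_sqrt ln_mult)
  finally show ?thesis .
qed

lemma weighted_sum_ln_gauss:
  fixes S :: "real^'d^'d" and y :: "'i \<Rightarrow> real^'d"
  assumes "det S > 0"
  shows "(\<Sum>i\<in>I. t i * ln (gauss (y i) mu S)) =
     - (1/2) * (\<Sum>i\<in>I. t i * ((y i - mu) \<bullet> (matrix_inv S *v (y i - mu))))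
     - (1/2) * (\<Sum>i\<in>I. t i) * (ln ((2 * pi) ^ CARD('d)) + ln (det S))"
proof -
  define q where "q i = (y i - mu) \<bullet> (matrix_inv S *v (y i - mu))" for i
  define K where "K = ln ((2 * pi) ^ CARD('d)) + ln (det S)"
  have "(\<Sum>i\<in>I. t i * ln (gauss (y i) mu S)) = (\<Sum>i\<in>I. t i * (- (1/2) * q i - (1/2) * K))"
    by (simp add: ln_gauss[OF assms] q_def K_def)
  also have "\<dots> = - (1/2) * (\<Sum>i\<in>I. t i * q i) - (1/2) * (\<Sum>i\<in>I. t i) * K"
    by (simp add: algebra_simps sum_subtractf sum_distrib_left sum_distrib_right sum_negf)
  finally show ?thesis by (simp add: q_def K_def)
qed

text \<open>By \<open>weighted_sum_quadratic_form_split\<close> the claim reduces to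
  \<open>ln det (Sg\<^sup>-\<^sup>1 S) \<le> tr (Sg\<^sup>-\<^sup>1 S) - d\<close>.\<close>
lemma weighted_ln_gauss_le_mle:
  fixes y :: "'i \<Rightarrow> real^'d" and S Sg :: "real^'d^'d"
  assumes W: "W = (\<Sum>i\<in>I. t i)" "W > 0"
    and m: "m = (\<Sum>i\<in>I. t i *\<^sub>R y i) /\<^sub>R W"
    and S_eq: "S = (\<Sum>i\<in>I. t i *\<^sub>R (\<chi> a b. (y i - m) $ a * (y i - m) $ b)) /\<^sub>R W"
    and S: "pos_def_mat S" and Sg: "pos_def_mat Sg"
  shows "(\<Sum>i\<in>I. t i * ln (gauss (y i) mu Sg)) \<le> (\<Sum>i\<in>I. t i * ln (gauss (y i) m S))"
proof -
  define C where "C = matrix_inv Sg"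
  define c where "c = ln ((2 * pi) ^ CARD('d))"
  have dS: "det S > 0" and dSg: "det Sg > 0" using S Sg pos_def_mat_det_pos by auto
  have C: "pos_def_mat C" "det C * det Sg = 1" using pos_def_mat_matrix_inv[OF Sg] by (simp_all add: C_def)
  have dC: "det C > 0" using pos_def_mat_det_pos[OF C(1)] .
  have split_S: "(\<Sum>i\<in>I. t i * ((y i - m) \<bullet> (matrix_inv S *v (y i - m)))) = W * real CARD('d)"
    using weighted_sum_quadratic_form_split[OF W(1) _ m S_eq, where C = "matrix_inv S" and mu = m] W(2)
      pos_def_mat_matrix_inv(2)[OF S] by (simp add: trace_I)
  have split_Sg: "(\<Sum>i\<in>I. t i * ((y i - mu) \<bullet> (C *v (y i - mu))))
      = W * trace (C ** S) + W * ((m - mu) \<bullet> (C *v (m - mu)))"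
    using weighted_sum_quadratic_form_split[OF W(1) _ m S_eq] W(2) by simp
  have "(m - mu) \<bullet> (C *v (m - mu)) \<ge> 0"
  proof (cases "m - mu = 0")
    case False
    thus ?thesis using C(1) unfolding pos_def_mat_def by (simp add: less_imp_le)
  qed simp
  moreover have "ln (det C * det S) \<le> trace (C ** S) - real CARD('d)"
    by (rule pos_def_mat_ln_det_mult_le_trace[OF C(1) S])
  moreover have "ln (det C * det S) = ln (det S) - ln (det Sg)"
  proof -
    have "ln (det C) + ln (det Sg) = ln (det C * det Sg)" using dC dSg by (simp add: ln_mult)
    hence "ln (det C) + ln (det Sg) = 0" using C(2) by simp
    thus ?thesis using dC dS by (simp add: ln_mult)
  qed
  ultimately have "real CARD('d) + ln (det S)
      \<le> trace (C ** S) + (m - mu) \<bullet> (C *v (m - mu)) + ln (det Sg)"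
    by linarith
  hence "W * (real CARD('d) + ln (det S))
      \<le> W * (trace (C ** S) + (m - mu) \<bullet> (C *v (m - mu)) + ln (det Sg))"
    using W(2) by (simp add: mult_left_mono)
  hence "- (1/2) * (W * trace (C ** S) + W * ((m - mu) \<bullet> (C *v (m - mu)))) - (1/2) * W * (c + ln (det Sg))
     \<le> - (1/2) * (W * real CARD('d)) - (1/2) * W * (c + ln (det S))"
    by (simp add: distrib_left)
  thus ?thesis
    unfolding weighted_sum_ln_gauss[OF dS] weighted_sum_ln_gauss[OF dSg] C_def[symmetric]
      c_def[symmetric] W(1)[symmetric] split_S split_Sg .
qed

lemma ln_minus_linear_le_max:
  fixes W c p :: real
  assumes "W > 0" "c > 0" "p > 0"
  shows "W * ln p - c * p \<le> W * ln (W / c) - W"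
proof -
  have "ln (c * p / W) \<le> c * p / W - 1" using assms by (intro ln_le_minus_one) simp
  hence "W * ln (c * p / W) \<le> W * (c * p / W - 1)" using assms(1) by (simp add: mult_left_mono)
  moreover have "ln (c * p / W) = ln p - ln (W / c)" using assms by (simp add: ln_div ln_mult)
  ultimately show ?thesis using assms(1) by (simp add: algebra_simps)
qed

lemma weighted_ln_component_le_mle:
  fixes y :: "'i \<Rightarrow> real^'d" and S Sg :: "real^'d^'d"
  assumes W: "W = (\<Sum>i\<in>I. w i)" "W > 0" and c: "c > 0" and p: "p > 0"
    and m: "m = (\<Sum>i\<in>I. w i *\<^sub>R y i) /\<^sub>R W"
    and S_eq: "S = (\<Sum>i\<in>I. w i *\<^sub>R (\<chi> a b. (y i - m) $ a * (y i - m) $ b)) /\<^sub>R W"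
    and S: "pos_def_mat S" and Sg: "pos_def_mat Sg"
  shows "(\<Sum>i\<in>I. w i * ln (p * gauss (y i) mu Sg)) - c * p
    \<le> (\<Sum>i\<in>I. w i * ln (W / c * gauss (y i) m S)) - c * (W / c)"
proof -
  have ln_split: "(\<Sum>i\<in>I. w i * ln (q * gauss (y i) nu R)) = W * ln q + (\<Sum>i\<in>I. w i * ln (gauss (y i) nu R))"
    if "q > 0" "pos_def_mat R" for q nu R
  proof -
    have g: "gauss (y i) nu R > 0" for i using gauss_pos pos_def_mat_det_pos[OF that(2)] by blast
    have "(\<Sum>i\<in>I. w i * ln (q * gauss (y i) nu R)) = (\<Sum>i\<in>I. ln q * w i + w i * ln (gauss (y i) nu R))"
      by (intro sum.cong refl) (simp add: ln_mult_pos[OF that(1) g] algebra_simps)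
      thus ?thesis using W(1) by (simp add: sum.distrib sum_distrib_left mult.commute)
  qed
  have "W / c > 0" using W(2) c by simp
  have "W * ln p - c * p \<le> W * ln (W / c) - W" by (rule ln_minus_linear_le_max[OF W(2) c p])
  moreover have "(\<Sum>i\<in>I. w i * ln (gauss (y i) mu Sg)) \<le> (\<Sum>i\<in>I. w i * ln (gauss (y i) m S))"
    by (rule weighted_ln_gauss_le_mle[OF W m S_eq S Sg])
  ultimately show ?thesis
    unfolding ln_split[OF p Sg] ln_split[OF \<open>W / c > 0\<close> S] using c by simp
qed

section \<open>Mixture log-likelihood and the CEMM step\<close>

lemma gibbs_inequality:
  fixes p q :: "'a \<Rightarrow> real"
  assumes "\<And>l. l \<in> A \<Longrightarrow> p l > 0" "\<And>l. l \<in> A \<Longrightarrow> q l > 0" and "sum p A = sum q A"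
  shows "(\<Sum>l\<in>A. p l * ln (p l / q l)) \<ge> 0"
proof -
  have "(\<Sum>l\<in>A. p l - q l) \<le> (\<Sum>l\<in>A. p l * ln (p l / q l))"
  proof (rule sum_mono)
    fix l assume l: "l \<in> A"
    have "ln (q l / p l) \<le> q l / p l - 1" using assms l by (intro ln_le_minus_one) simp
    hence "p l * ln (q l / p l) \<le> p l * (q l / p l - 1)" using assms(1)[OF l] by (simp add: mult_left_mono)
    moreover have "ln (p l / q l) = - ln (q l / p l)" using assms l by (simp add: ln_div)
    ultimately show "p l - q l \<le> p l * ln (p l / q l)" using assms(1)[OF l] by (simp add: algebra_simps)
  qed
  thus ?thesis using assms(3) by (simp add: sum_subtractf)
qed

definition comp_density :: "('d::finite) param \<Rightarrow> real^'d \<Rightarrow> nat \<Rightarrow> real" where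
  "comp_density th x l = prp th l * gauss x (mn th l) (cv th l)"

definition pos_params :: "nat \<Rightarrow> ('d::finite) param \<Rightarrow> bool" where
  "pos_params J th \<longleftrightarrow> (\<forall>l<J. prp th l > 0 \<and> pos_def_mat (cv th l))"

lemma mix_eq_sum_comp_density: "mix J th x = (\<Sum>l<J. comp_density th x l)"
  by (simp add: mix_def comp_density_def)

lemma tij_eq_comp_density: "tij J y th i l = comp_density th (y i) l / mix J th (y i)"
  by (simp add: tij_def comp_density_def)

lemma comp_density_pos:
  assumes "pos_params J th" "l < J"
  shows "comp_density th x l > 0"
  using assms pos_def_mat_det_pos gauss_pos unfolding pos_params_def comp_density_def
  by (metis mult_pos_pos)

lemma mix_pos:
  assumes "J \<ge> 1" "pos_params J th"
  shows "mix J th x > 0"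
  unfolding mix_eq_sum_comp_density
proof (rule sum_pos)
  show "{..<J} \<noteq> {}" using assms(1) by (simp add: lessThan_empty_iff)
qed (use comp_density_pos[OF assms(2)] in auto)

lemma tij_pos:
  assumes "J \<ge> 1" "pos_params J th" "l < J"
  shows "tij J y th i l > 0"
  unfolding tij_eq_comp_density using assms comp_density_pos mix_pos by (metis divide_pos_pos)

lemma sum_tij:
  assumes "J \<ge> 1" "pos_params J th"
  shows "(\<Sum>l<J. tij J y th i l) = 1"
  using mix_pos[OF assms, of "y i"] unfolding tij_eq_comp_density
  by (simp add: sum_divide_distrib[symmetric] mix_eq_sum_comp_density[symmetric])

lemma ln_mix_eq:
  assumes "J \<ge> 1" "pos_params J th" "l < J"
  shows "ln (mix J th (y i)) = ln (comp_density th (y i) l) - ln (tij J y th i l)"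
  using mix_pos[OF assms(1,2), of "y i"] comp_density_pos[OF assms(2,3), of "y i"]
  by (simp add: tij_eq_comp_density ln_div)

lemma Dfun_nonneg:
  assumes "J \<ge> 1" "pos_params J th" "pos_params J th'"
  shows "Dfun J n y th' th \<ge> 0"
  unfolding Dfun_def
proof (rule sum_nonneg)
  fix i
  show "(\<Sum>l<J. tij J y th i l * ln (tij J y th i l / tij J y th' i l)) \<ge> 0"
    by (rule gibbs_inequality)
      (use tij_pos[OF assms(1,2)] tij_pos[OF assms(1,3)] sum_tij[OF assms(1,2)]
        sum_tij[OF assms(1,3)] in auto)
qed

lemma ln_mix_diff_eq:
  assumes J: "J \<ge> 1" and th: "pos_params J th" and th': "pos_params J th'"
  shows "ln (mix J th' (y i)) - ln (mix J th (y i)) =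
    (\<Sum>l<J. tij J y th i l * (ln (comp_density th' (y i) l) - ln (comp_density th (y i) l)))
    + (\<Sum>l<J. tij J y th i l * ln (tij J y th i l / tij J y th' i l))"
proof -
  let ?T = "tij J y th i" and ?T' = "tij J y th' i"
  let ?d = "ln (mix J th' (y i)) - ln (mix J th (y i))"
  have "?d = (\<Sum>l<J. ?T l * ?d)" using sum_tij[OF J th] by (simp add: sum_distrib_right[symmetric])
  also have "\<dots> = (\<Sum>l<J. ?T l * (ln (comp_density th' (y i) l) - ln (comp_density th (y i) l))
      + ?T l * ln (?T l / ?T' l))"
  proof (rule sum.cong[OF refl])
    fix l assume "l \<in> {..<J}"
    hence l: "l < J" by simp
    have "?d = ln (comp_density th' (y i) l) - ln (comp_density th (y i) l) + (ln (?T l) - ln (?T' l))"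
      using ln_mix_eq[OF J th l] ln_mix_eq[OF J th' l] by simp
    also have "ln (?T l) - ln (?T' l) = ln (?T l / ?T' l)"
      using tij_pos[OF J th l, of y i] tij_pos[OF J th' l, of y i] by (simp add: ln_div)
    finally show "?T l * ?d = ?T l * (ln (comp_density th' (y i) l) - ln (comp_density th (y i) l))
      + ?T l * ln (?T l / ?T' l)" by (simp add: distrib_left)
  qed
  finally show ?thesis by (simp add: sum.distrib)
qed

lemma modloglik_diff_eq:
  assumes J: "J \<ge> 1" and th: "pos_params J th" and th': "pos_params J th'"
  shows "modloglik J n y th' - modloglik J n y th =
    (\<Sum>i<n. \<Sum>l<J. tij J y th i l * (ln (comp_density th' (y i) l) - ln (comp_density th (y i) l)))
    - real n * ((\<Sum>l<J. prp th' l) - (\<Sum>l<J. prp th l)) + Dfun J n y th' th"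
proof -
  have "modloglik J n y th' - modloglik J n y th =
      (\<Sum>i<n. ln (mix J th' (y i)) - ln (mix J th (y i)))
      - real n * ((\<Sum>l<J. prp th' l) - (\<Sum>l<J. prp th l))"
    unfolding modloglik_def loglik_def by (simp add: sum_subtractf algebra_simps)
  thus ?thesis
    unfolding ln_mix_diff_eq[OF assms] Dfun_def by (simp add: sum.distrib)
qed

lemma cemm_step_components:
  fixes th :: "('d::finite) param" and J k n :: nat and y :: "nat \<Rightarrow> real^'d"
  defines "j \<equiv> k mod J"
  defines "w \<equiv> (\<lambda>i. tij J y th i j)"
  defines "W \<equiv> (\<Sum>i<n. w i)"
  defines "m \<equiv> (\<Sum>i<n. w i *\<^sub>R y i) /\<^sub>R W"
  shows "prp (cemm_step J n y k th) = (prp th)(j := W / real n)"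
    "mn (cemm_step J n y k th) = (mn th)(j := m)"
    "cv (cemm_step J n y k th)
      = (cv th)(j := (\<Sum>i<n. w i *\<^sub>R (\<chi> a b. (y i - m) $ a * (y i - m) $ b)) /\<^sub>R W)"
  unfolding cemm_step_def Let_def prp_def mn_def cv_def j_def w_def W_def m_def by simp_all

lemma sum_tij_pos:
  assumes "J \<ge> 1" "n \<ge> 1" "pos_params J th" "j < J"
  shows "(\<Sum>i<n. tij J y th i j) > 0"
proof (rule sum_pos)
  show "{..<n} \<noteq> {}" using assms(2) by (simp add: lessThan_empty_iff)
qed (use tij_pos[OF assms(1,3,4)] in auto)

lemma cemm_step_prp_pos:
  assumes "J \<ge> 1" "n \<ge> 1" "pos_params J th" "l < J"
  shows "prp (cemm_step J n y k th) l > 0"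
proof (cases "l = k mod J")
  case True
  thus ?thesis using sum_tij_pos[OF assms(1-3), of "k mod J"] assms(1,2)
    by (simp add: cemm_step_components)
next
  case False
  thus ?thesis using assms(3,4) by (simp add: cemm_step_components pos_params_def)
qed

lemma sum_lessThan_single:
  fixes f :: "nat \<Rightarrow> 'a::comm_monoid_add"
  assumes "j < J" "\<And>l. l < J \<Longrightarrow> l \<noteq> j \<Longrightarrow> f l = 0"
  shows "(\<Sum>l<J. f l) = f j"
  using assms by (subst sum.mono_neutral_right[of "{..<J}" "{j}"]) auto

lemma modloglik_diff_single_component:
  assumes J: "J \<ge> 1" and th: "pos_params J th" and th': "pos_params J th'" and j: "j < J"
    and same: "\<And>l. l \<noteq> j \<Longrightarrow> prp th' l = prp th l \<and> mn th' l = mn th l \<and> cv th' l = cv th l"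
  shows "modloglik J n y th' - modloglik J n y th =
    (\<Sum>i<n. tij J y th i j * (ln (comp_density th' (y i) j) - ln (comp_density th (y i) j)))
    - real n * (prp th' j - prp th j) + Dfun J n y th' th"
proof -
  have "(\<Sum>l<J. tij J y th i l * (ln (comp_density th' (y i) l) - ln (comp_density th (y i) l)))
      = tij J y th i j * (ln (comp_density th' (y i) j) - ln (comp_density th (y i) j))" for i
    by (rule sum_lessThan_single[OF j]) (simp add: comp_density_def same)
  moreover have "(\<Sum>l<J. prp th' l) - (\<Sum>l<J. prp th l) = prp th' j - prp th j"
    using sum_lessThan_single[OF j, of "\<lambda>l. prp th' l - prp th l"] same by (simp add: sum_subtractf)
  ultimately show ?thesis using modloglik_diff_eq[OF J th th'] by simp
qed

lemma cemm_step_ascent: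
  fixes th :: "('d::finite) param"
  assumes J: "J \<ge> 1" and n: "n \<ge> 1" and th: "pos_params J th"
    and th': "pos_params J (cemm_step J n y k th)"
  shows "modloglik J n y (cemm_step J n y k th) - modloglik J n y th
    \<ge> Dfun J n y (cemm_step J n y k th) th"
proof -
  define th' where "th' = cemm_step J n y k th"
  define j where "j = k mod J"
  define w where "w i = tij J y th i j" for i
  define W where "W = (\<Sum>i<n. w i)"
  define m where "m = (\<Sum>i<n. w i *\<^sub>R y i) /\<^sub>R W"
  define S where "S = (\<Sum>i<n. w i *\<^sub>R (\<chi> a b. (y i - m) $ a * (y i - m) $ b)) /\<^sub>R W"
  have j: "j < J" using J by (simp add: j_def)
  have upd: "prp th' = (prp th)(j := W / real n)" "mn th' = (mn th)(j := m)" "cv th' = (cv th)(j := S)"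
    unfolding th'_def j_def w_def W_def m_def S_def by (simp_all add: cemm_step_components)
  have W: "W > 0" unfolding W_def w_def by (rule sum_tij_pos[OF J n th j])
  have Sg_pd: "pos_def_mat (cv th j)" and p: "prp th j > 0"
    using th j by (simp_all add: pos_params_def)
  have "pos_def_mat (cv th' j)" using th' j by (simp add: th'_def pos_params_def)
  hence S_pd: "pos_def_mat S" by (simp add: upd)
  have "(\<Sum>i<n. w i * ln (prp th j * gauss (y i) (mn th j) (cv th j))) - real n * prp th j
      \<le> (\<Sum>i<n. w i * ln (W / real n * gauss (y i) m S)) - real n * (W / real n)"
    using n by (intro weighted_ln_component_le_mle[OF W_def W _ p m_def S_def S_pd Sg_pd]) simp
  moreover have "modloglik J n y th' - modloglik J n y th =
      (\<Sum>i<n. w i * (ln (W / real n * gauss (y i) m S) - ln (prp th j * gauss (y i) (mn th j) (cv th j))))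
      - real n * (W / real n - prp th j) + Dfun J n y th' th"
    using modloglik_diff_single_component[OF J th th'[folded th'_def] j, where n = n and y = y]
    by (simp add: upd comp_density_def w_def)
  ultimately show ?thesis
    unfolding th'_def[symmetric] by (simp add: right_diff_distrib sum_subtractf)
qed

theorem proposition2:
  fixes J n :: nat and y :: "nat \<Rightarrow> real^'d" and theta :: "nat \<Rightarrow> 'd param"
  assumes "J \<ge> 1" and "n \<ge> 1"
    and "in_Theta J (theta 0)"
    and "\<And>k. theta (Suc k) = cemm_step J n y k (theta k)"
    and "\<And>k j. j < J \<Longrightarrow> pos_def_mat (cv (theta k) j)"
  shows "mono (\<lambda>k. modloglik J n y (theta k))
    \<and> (\<forall>k. modloglik J n y (theta (Suc k)) - modloglik J n y (theta k)
            \<ge> Dfun J n y (theta (Suc k)) (theta k))"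
proof -
  have pos: "pos_params J (theta k)" for k
  proof (induction k)
    case 0
    show ?case using assms(3) unfolding in_Theta_def pos_params_def by blast
  next
    case (Suc k)
    show ?case unfolding pos_params_def
    proof (intro allI impI conjI)
      fix l assume l: "l < J"
      show "prp (theta (Suc k)) l > 0"
        unfolding assms(4) by (rule cemm_step_prp_pos[OF assms(1,2) Suc.IH l])
      show "pos_def_mat (cv (theta (Suc k)) l)" using assms(5) l .
    qed
  qed
  have ascent: "modloglik J n y (theta (Suc k)) - modloglik J n y (theta k)
      \<ge> Dfun J n y (theta (Suc k)) (theta k)" for k
    using cemm_step_ascent[OF assms(1,2) pos pos[of "Suc k", unfolded assms(4)]] assms(4) by simp
  have "modloglik J n y (theta k) \<le> modloglik J n y (theta (Suc k))" for k
    using ascent[of k] Dfun_nonneg[OF assms(1) pos[of k] pos[of "Suc k"], of n y] by linarith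
  hence "mono (\<lambda>k. modloglik J n y (theta k))" by (simp add: mono_iff_le_Suc)
  with ascent show ?thesis by blast
qed

end
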